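(* Let $A\in\mathbb{C}^{m\times n}$ have rank $r$, $B\in\mathbb{C}^{m\times n}$ have rank $s$, and $E=B-A$. Then $$\|B^{\dagger}-A^{\dagger}\|_{F}^{2}\leq\min\big\{\alpha_{1}+\|B^{\dagger}EA^{\dagger}\|_{F}^{2},\ \alpha_{2}+\|A^{\dagger}EB^{\dagger}\|_{F}^{2}\big\},$$ where $$\alpha_{1}:=\|A^{\dagger}\|_{2}^{2}\big(\|A^{\dagger}E\|_{F}^{2}-\|A^{\dagger}EB^{\dagger}B\|_{F}^{2}\big)+\|B^{\dagger}\|_{2}^{2}\big(\|EB^{\dagger}\|_{F}^{2}-\|AA^{\dagger}EB^{\dagger}\|_{F}^{2}\big),$$ $$\alpha_{2}:=\|A^{\dagger}\|_{2}^{2}\big(\|EA^{\dagger}\|_{F}^{2}-\|BB^{\dagger}EA^{\dagger}\|_{F}^{2}\big)+\|B^{\dagger}\|_{2}^{2}\big(\|B^{\dagger}E\|_{F}^{2}-\|B^{\dagger}EA^{\dagger}A\|_{F}^{2}\big).$$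
   Context: $M^{\dagger}$ denotes the Moore–Penrose inverse of $M$, $\|\cdot\|_{2}$ the spectral norm and $\|\cdot\|_{F}$ the Frobenius norm. *)

theory Defs
  imports "HOL-Analysis.Analysis"
begin

definition cadjoint :: "complex^'n^'m \<Rightarrow> complex^'m^'n" where
  "cadjoint A = (\<chi> i j. cnj (A $ j $ i))"

definition pinv :: "complex^'n^'m \<Rightarrow> complex^'m^'n" where
  "pinv A = (THE X. A ** X ** A = A \<and> X ** A ** X = X \<and>
                    cadjoint (A ** X) = A ** X \<and> cadjoint (X ** A) = X ** A)"

definition spec_norm :: "complex^'n^'m \<Rightarrow> real" where
  "spec_norm A = onorm (\<lambda>x::complex^'n. A *v x)"

definition frob_norm :: "complex^'n^'m \<Rightarrow> real" where
  "frob_norm A = sqrt (\<Sum>i\<in>UNIV. \<Sum>j\<in>UNIV. (cmod (A $ i $ j))\<^sup>2)"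

end

theory Submission
  imports Defs
begin

(* With P = A A^+ and Q = B^+ B, which are orthogonal projectors,
     B^+ - A^+ = - B^+ E A^+ + B^+ (I - P) - (I - Q) A^+,
   and the three terms are pairwise orthogonal in the Frobenius inner product:
   the first satisfies Q X = X = X P, the second Q X = X and X P = 0, the third Q X = 0.
   Since B^+ = B^+ (B^+)^* B^* and A^* (I - P) = 0, the second term equals
   B^+ ((I - P) E B^+)^*, so its norm is at most ||B^+||_2 ||(I - P) E B^+||_F, and
   Pythagoras gives ||(I - P) E B^+||_F^2 = ||E B^+||_F^2 - ||P E B^+||_F^2. The third
   term is handled symmetrically, which gives the first bound; the second bound is the
   first one with A and B exchanged. *)

section \<open>Conjugate transpose and the Frobenius inner product\<close>

lemma cadjoint_nth [simp]: "cadjoint A $ i $ j = cnj (A $ j $ i)"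
  by (simp add: cadjoint_def)

lemma cadjoint_cadjoint [simp]: "cadjoint (cadjoint A) = A"
  by (simp add: vec_eq_iff)

lemma cadjoint_matrix_mult: "cadjoint (A ** B) = cadjoint B ** cadjoint A"
  by (simp add: vec_eq_iff matrix_matrix_mult_def mult.commute)

lemma cadjoint_diff: "cadjoint (A - B) = cadjoint A - cadjoint B"
  by (simp add: vec_eq_iff)

lemma cadjoint_mat_1 [simp]: "cadjoint (mat 1) = mat 1"
  by (simp add: vec_eq_iff mat_def)

lemma matrix_diff_ldistrib: "(A :: 'a::ring_1^'n^'m) ** (B - C) = A ** B - A ** C"
  by (simp add: vec_eq_iff matrix_matrix_mult_def sum_subtractf right_diff_distrib)

lemma matrix_diff_rdistrib: "((A :: 'a::ring_1^'n^'m) - B) ** C = A ** C - B ** C"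
  by (simp add: vec_eq_iff matrix_matrix_mult_def sum_subtractf left_diff_distrib)

lemma matrix_mul_lneg: "(- (A :: 'a::ring_1^'n^'m)) ** B = - (A ** B)"
  by (simp add: vec_eq_iff matrix_matrix_mult_def sum_negf)

lemma matrix_mul_rneg: "(A :: 'a::ring_1^'n^'m) ** (- B) = - (A ** B)"
  by (simp add: vec_eq_iff matrix_matrix_mult_def sum_negf)

lemma column_matrix_mult: "column j (M ** N) = M *v column j N"
  by (simp add: vec_eq_iff column_def matrix_matrix_mult_def matrix_vector_mult_def)

lemma inner_matrix_columns:
  "inner (X :: 'a::real_inner^'n^'m) Y = (\<Sum>j\<in>UNIV. inner (column j X) (column j Y))"
  unfolding inner_vec_def column_def by simp (rule sum.swap)

lemma power2_norm_matrix_columns: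
  "(norm (X :: 'a::real_inner^'n^'m))\<^sup>2 = (\<Sum>j\<in>UNIV. (norm (column j X))\<^sup>2)"
  by (simp add: power2_norm_eq_inner inner_matrix_columns)

lemma frob_norm_eq_norm: "frob_norm A = norm A"
  by (simp add: frob_norm_def norm_vec_def L2_set_def sum_nonneg)

lemma inner_cadjoint: "inner (cadjoint X) (cadjoint Y) = inner X Y"
  unfolding inner_vec_def by (simp add: inner_complex_def) (rule sum.swap)

lemma norm_cadjoint: "norm (cadjoint A) = norm A"
  by (simp add: norm_eq_sqrt_inner inner_cadjoint)

lemma inner_complex_vec: "inner (x :: complex^'n) y = Re (\<Sum>i\<in>UNIV. cnj (x $ i) * y $ i)"
  by (simp add: inner_vec_def inner_complex_def Re_sum)

lemma inner_matrix_vector_cadjoint: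
  fixes M :: "complex^'n^'m"
  shows "inner x (M *v y) = inner (cadjoint M *v x) y"
proof -
  have "(\<Sum>i\<in>UNIV. cnj (x$i) * (\<Sum>j\<in>UNIV. M$i$j * y$j)) =
        (\<Sum>j\<in>UNIV. (\<Sum>i\<in>UNIV. M$i$j * cnj (x$i)) * y$j)"
    by (simp add: sum_distrib_left sum_distrib_right mult_ac) (rule sum.swap)
  then show ?thesis
    by (simp add: inner_complex_vec matrix_vector_mult_def)
qed

lemma inner_matrix_mult_left: "inner X (P ** Y) = inner (cadjoint P ** X) (Y :: complex^'n^'k)"
proof -
  have "inner X (P ** Y) = (\<Sum>j\<in>UNIV. inner (column j X) (P *v column j Y))"
    by (simp only: inner_matrix_columns column_matrix_mult)
  also have "\<dots> = (\<Sum>j\<in>UNIV. inner (cadjoint P *v column j X) (column j Y))"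
    by (simp only: inner_matrix_vector_cadjoint)
  also have "\<dots> = inner (cadjoint P ** X) Y"
    by (simp only: inner_matrix_columns column_matrix_mult)
  finally show ?thesis .
qed

lemma inner_matrix_mult_right: "inner X (Y ** P) = inner (X ** cadjoint P) (Y :: complex^'k^'m)"
proof -
  have "inner X (Y ** P) = inner (cadjoint X) (cadjoint P ** cadjoint Y)"
    by (simp only: inner_cadjoint flip: cadjoint_matrix_mult)
  also have "\<dots> = inner (P ** cadjoint X) (cadjoint Y)"
    by (simp only: inner_matrix_mult_left cadjoint_cadjoint)
  also have "\<dots> = inner (X ** cadjoint P) Y"
    using inner_cadjoint[of "X ** cadjoint P" Y] by (simp add: cadjoint_matrix_mult)
  finally show ?thesis .
qed

section \<open>Spectral norm\<close>

lemma norm_matrix_vector_le_spec_norm: "norm (M *v x) \<le> spec_norm M * norm x"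
  unfolding spec_norm_def by (rule onorm) simp

lemma spec_norm_nonneg: "0 \<le> spec_norm M"
  unfolding spec_norm_def by (rule onorm_pos_le) simp

lemma spec_norm_cadjoint_le: "spec_norm (cadjoint M) \<le> spec_norm M"
  unfolding spec_norm_def[of "cadjoint M"]
proof (rule onorm_bound[OF spec_norm_nonneg])
  fix y
  let ?z = "cadjoint M *v y"
  have "norm ?z * norm ?z = inner y (M *v ?z)"
    using inner_matrix_vector_cadjoint[of y M ?z] by (simp add: norm_eq_sqrt_inner)
  also have "\<dots> \<le> norm y * norm (M *v ?z)"
    by (rule norm_cauchy_schwarz)
  also have "\<dots> \<le> norm y * (spec_norm M * norm ?z)"
    by (rule mult_left_mono[OF norm_matrix_vector_le_spec_norm norm_ge_zero])
  finally have le: "norm ?z * norm ?z \<le> (spec_norm M * norm y) * norm ?z"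
    by (simp only: mult_ac)
  show "norm ?z \<le> spec_norm M * norm y"
  proof (cases "norm ?z = 0")
    case True
    then show ?thesis
      using spec_norm_nonneg[of M] by simp
  next
    case False
    then show ?thesis
      using mult_right_le_imp_le[OF le] by simp
  qed
qed

lemma norm_matrix_mult_le_left: "norm (M ** N) \<le> spec_norm M * norm N"
proof -
  have "(norm (M ** N))\<^sup>2 = (\<Sum>j\<in>UNIV. (norm (M *v column j N))\<^sup>2)"
    by (simp add: power2_norm_matrix_columns column_matrix_mult)
  also have "\<dots> \<le> (\<Sum>j\<in>UNIV. (spec_norm M * norm (column j N))\<^sup>2)"
    by (intro sum_mono power_mono norm_matrix_vector_le_spec_norm) simp
  also have "\<dots> = (spec_norm M * norm N)\<^sup>2"
    by (simp add: power2_norm_matrix_columns[of N] power_mult_distrib sum_distrib_left)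
  finally show ?thesis
    by (rule power2_le_imp_le) (simp add: spec_norm_nonneg)
qed

lemma norm_matrix_mult_le_right: "norm (N ** M) \<le> norm N * spec_norm M"
proof -
  have "norm (N ** M) = norm (cadjoint M ** cadjoint N)"
    by (simp only: norm_cadjoint flip: cadjoint_matrix_mult)
  also have "\<dots> \<le> spec_norm (cadjoint M) * norm (cadjoint N)"
    by (rule norm_matrix_mult_le_left)
  also have "\<dots> = spec_norm (cadjoint M) * norm N"
    by (simp only: norm_cadjoint)
  also have "\<dots> \<le> spec_norm M * norm N"
    by (rule mult_right_mono[OF spec_norm_cadjoint_le norm_ge_zero])
  finally show ?thesis
    by (simp add: mult.commute)
qed

section \<open>The Moore--Penrose inverse\<close>

lemma linear_matrix_mult_left: "linear (\<lambda>Y. (M :: 'a::real_algebra_1^'k^'m) ** (Y :: 'a^'n^'k))"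
  by (rule linearI) (simp_all add: matrix_add_ldistrib matrix_scalar_ac scalar_matrix_assoc)

lemma normal_equation_solvable: "\<exists>Y. cadjoint C ** C ** Y = cadjoint (C :: complex^'n^'m)"
proof -
  let ?S = "range (\<lambda>Y :: complex^'m^'n. cadjoint C ** C ** Y)"
  have "span ?S = ?S"
    by (simp add: linear_subspace_image[OF linear_matrix_mult_left subspace_UNIV])
  then obtain R W where R: "R \<in> ?S" and W: "\<And>U. U \<in> ?S \<Longrightarrow> inner W U = 0"
    and decomp: "cadjoint C = R + W"
    using orthogonal_subspace_decomp_exists[of ?S "cadjoint C"]
    by (metis orthogonal_def orthogonal_commute)
  \<comment> \<open>W is orthogonal to the range of C^* C, so C W = 0, hence W is orthogonal to C^* and vanishes.\<close>
  have "inner (C ** W) (C ** W) = inner W (cadjoint C ** C ** W)"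
    using inner_matrix_mult_left[of W "cadjoint C" "C ** W"] by (simp add: matrix_mul_assoc)
  then have "C ** W = 0"
    using W by simp
  then have "inner W (cadjoint C ** mat 1) = 0"
    by (simp only: inner_matrix_mult_left cadjoint_cadjoint) simp
  then have "inner W W = 0"
    using W[OF R] by (simp add: decomp inner_add_right)
  then obtain Y where "cadjoint C = cadjoint C ** C ** Y"
    using R decomp by auto
  then show ?thesis
    by metis
qed

lemma normal_equation_solution:
  assumes "cadjoint C ** C ** Y = cadjoint C"
  shows "cadjoint (C ** Y) = C ** Y" and "C ** Y ** C = C"
proof -
  have "cadjoint (C ** Y) ** (C ** Y) = cadjoint (C ** Y)"
    using arg_cong[OF assms, of "\<lambda>M. cadjoint Y ** M"]
    by (simp add: cadjoint_matrix_mult matrix_mul_assoc)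
  then show selfadjoint: "cadjoint (C ** Y) = C ** Y"
    by (metis cadjoint_cadjoint cadjoint_matrix_mult)
  have "cadjoint (cadjoint C ** C ** Y) = C"
    using assms by simp
  then show "C ** Y ** C = C"
    using selfadjoint by (simp add: cadjoint_matrix_mult matrix_mul_assoc)
qed

definition penrose_conditions :: "complex^'n^'m \<Rightarrow> complex^'m^'n \<Rightarrow> bool" where
  "penrose_conditions A X \<longleftrightarrow> A ** X ** A = A \<and> X ** A ** X = X \<and>
     cadjoint (A ** X) = A ** X \<and> cadjoint (X ** A) = X ** A"

lemma penrose_conditions_solvable: "\<exists>X. penrose_conditions A X"
proof -
  obtain Y where "cadjoint A ** A ** Y = cadjoint A"
    using normal_equation_solvable by blast
  note Y = normal_equation_solution[OF this]
  obtain Z where "cadjoint (cadjoint A) ** cadjoint A ** Z = cadjoint (cadjoint A)"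
    using normal_equation_solvable by blast
  note Z = normal_equation_solution[OF this]
  have AZA: "A ** cadjoint Z ** A = A"
    using arg_cong[OF Z(2), of cadjoint] by (simp add: cadjoint_matrix_mult matrix_mul_assoc)
  have ZA: "cadjoint (cadjoint Z ** A) = cadjoint Z ** A"
    using Z(1) by (metis cadjoint_cadjoint cadjoint_matrix_mult)
  \<comment> \<open>Both Y and Z^* satisfy A G A = A, with A Y and Z^* A hermitian; Z^* A Y inherits both.\<close>
  define X where "X = cadjoint Z ** A ** Y"
  have AX: "A ** X = A ** Y"
    using AZA by (simp add: X_def matrix_mul_assoc)
  have XA: "X ** A = cadjoint Z ** A"
    using Y(2) by (simp add: X_def flip: matrix_mul_assoc)
  have "X ** A ** X = cadjoint Z ** (A ** cadjoint Z ** A) ** Y"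
    unfolding XA by (simp add: X_def matrix_mul_assoc)
  then have "X ** A ** X = X"
    using AZA by (simp add: X_def)
  then have "penrose_conditions A X"
    using AX XA Y ZA by (simp add: penrose_conditions_def)
  then show ?thesis ..
qed

lemma penrose_conditions_unique:
  assumes X: "penrose_conditions A X" and X': "penrose_conditions A X'"
  shows "X = X'"
proof -
  have AX'A: "A ** X' ** A = A" and X'AX': "X' ** A ** X' = X'"
    and AX': "cadjoint (A ** X') = A ** X'" and X'A: "cadjoint (X' ** A) = X' ** A"
    using X' by (simp_all add: penrose_conditions_def)
  have AXA: "A ** X ** A = A" and XAX: "X ** A ** X = X"
    and AX: "cadjoint (A ** X) = A ** X" and XA: "cadjoint (X ** A) = X ** A"
    using X by (simp_all add: penrose_conditions_def)
  have "cadjoint A = cadjoint (A ** X' ** A)"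
    using AX'A by simp
  also have "\<dots> = cadjoint A ** cadjoint (A ** X')"
    by (simp add: cadjoint_matrix_mult matrix_mul_assoc)
  also have "\<dots> = cadjoint A ** A ** X'"
    using AX' by (simp add: matrix_mul_assoc)
  finally have "cadjoint A = cadjoint A ** A ** X'" .
  moreover have "X = X ** cadjoint X ** cadjoint A"
    using AX XAX by (metis cadjoint_matrix_mult matrix_mul_assoc)
  ultimately have left: "X = X ** A ** X'"
    by (metis matrix_mul_assoc)
  have "cadjoint A = X ** A ** cadjoint A"
    using arg_cong[OF AXA, of cadjoint] XA by (simp add: cadjoint_matrix_mult matrix_mul_assoc)
  moreover have "X' = cadjoint A ** cadjoint X' ** X'"
    using X'A X'AX' by (metis cadjoint_matrix_mult matrix_mul_assoc)
  ultimately have "X' = X ** A ** X'"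
    by (metis matrix_mul_assoc)
  with left show ?thesis
    by simp
qed

lemma pinv_penrose_conditions: "penrose_conditions A (pinv A)"
proof -
  have "pinv A = (THE X. penrose_conditions A X)"
    by (simp add: pinv_def penrose_conditions_def)
  then show ?thesis
    using theI'[of "penrose_conditions A"] penrose_conditions_solvable penrose_conditions_unique
    by metis
qed

lemma
  shows mult_pinv_mult: "A ** pinv A ** A = A"
    and pinv_mult_pinv: "pinv A ** A ** pinv A = pinv A"
    and cadjoint_mult_pinv: "cadjoint (A ** pinv A) = A ** pinv A"
    and cadjoint_pinv_mult: "cadjoint (pinv A ** A) = pinv A ** A"
  using pinv_penrose_conditions[of A] by (simp_all add: penrose_conditions_def)

lemma pinv_mult_cadjoint_pinv_cadjoint: "pinv A ** cadjoint (pinv A) ** cadjoint A = pinv A"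
proof -
  have "pinv A ** cadjoint (pinv A) ** cadjoint A = pinv A ** cadjoint (A ** pinv A)"
    by (simp only: cadjoint_matrix_mult matrix_mul_assoc)
  then show ?thesis
    by (simp only: cadjoint_mult_pinv matrix_mul_assoc pinv_mult_pinv)
qed

lemma cadjoint_cadjoint_pinv_pinv: "cadjoint A ** cadjoint (pinv A) ** pinv A = pinv A"
  by (simp only: cadjoint_pinv_mult pinv_mult_pinv flip: cadjoint_matrix_mult)

lemma cadjoint_mult_complement_range: "cadjoint A ** (mat 1 - A ** pinv A) = 0"
proof -
  have "cadjoint A ** (A ** pinv A) = cadjoint (A ** pinv A ** A)"
    by (simp only: cadjoint_matrix_mult[of "A ** pinv A" A] cadjoint_mult_pinv)
  then show ?thesis
    by (simp add: mult_pinv_mult matrix_diff_ldistrib)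
qed

lemma complement_corange_mult_cadjoint: "(mat 1 - pinv A ** A) ** cadjoint A = 0"
proof -
  have "pinv A ** A ** cadjoint A = cadjoint (A ** (pinv A ** A))"
    by (simp only: cadjoint_matrix_mult[of A "pinv A ** A"] cadjoint_pinv_mult)
  then show ?thesis
    by (simp add: matrix_mul_assoc mult_pinv_mult matrix_diff_rdistrib)
qed

section \<open>Orthogonal projectors\<close>

definition orthogonal_projector :: "complex^'n^'n \<Rightarrow> bool" where
  "orthogonal_projector P \<longleftrightarrow> cadjoint P = P \<and> P ** P = P"

lemma orthogonal_projector_complement:
  "orthogonal_projector P \<Longrightarrow> orthogonal_projector (mat 1 - P)"
  by (simp add: orthogonal_projector_def cadjoint_diff matrix_diff_ldistrib matrix_diff_rdistrib)

lemma orthogonal_projector_mult_pinv: "orthogonal_projector (A ** pinv A)"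
  by (simp add: orthogonal_projector_def cadjoint_mult_pinv mult_pinv_mult matrix_mul_assoc)

lemma orthogonal_projector_pinv_mult: "orthogonal_projector (pinv A ** A)"
  by (simp add: orthogonal_projector_def cadjoint_pinv_mult pinv_mult_pinv matrix_mul_assoc)

lemma orthogonal_projector_mult_complement:
  assumes "orthogonal_projector P"
  shows "P ** (mat 1 - P) = 0" and "(mat 1 - P) ** P = 0"
  using assms by (simp_all add: orthogonal_projector_def matrix_diff_ldistrib matrix_diff_rdistrib)

lemma inner_eq_0_selfadjoint_left:
  assumes "cadjoint P = P" and "P ** X = X" and "P ** Y = 0"
  shows "inner X Y = 0"
  by (metis assms inner_matrix_mult_left inner_zero_right)

lemma inner_eq_0_selfadjoint_right:
  assumes "cadjoint P = P" and "X ** P = X" and "Y ** P = 0"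
  shows "inner X Y = 0"
  by (metis assms inner_matrix_mult_right inner_zero_right)

lemma power2_norm_complement_projector_left:
  assumes P: "orthogonal_projector P"
  shows "(norm ((mat 1 - P) ** Y))\<^sup>2 = (norm Y)\<^sup>2 - (norm (P ** Y))\<^sup>2"
proof -
  have "inner (P ** Y) ((mat 1 - P) ** Y) = 0"
    using P orthogonal_projector_mult_complement[OF P]
    by (intro inner_eq_0_selfadjoint_left[of P]) (simp_all add: orthogonal_projector_def matrix_mul_assoc)
  moreover have "Y = P ** Y + (mat 1 - P) ** Y"
    by (simp add: matrix_diff_rdistrib)
  ultimately have "(norm Y)\<^sup>2 = (norm (P ** Y))\<^sup>2 + (norm ((mat 1 - P) ** Y))\<^sup>2"
    by (metis norm_add_Pythagorean orthogonal_def)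
  then show ?thesis
    by simp
qed

lemma power2_norm_complement_projector_right:
  assumes P: "orthogonal_projector P"
  shows "(norm (Y ** (mat 1 - P)))\<^sup>2 = (norm Y)\<^sup>2 - (norm (Y ** P))\<^sup>2"
proof -
  have "inner (Y ** P) (Y ** (mat 1 - P)) = 0"
    using P orthogonal_projector_mult_complement[OF P]
    by (intro inner_eq_0_selfadjoint_right[of P]) (simp_all add: orthogonal_projector_def flip: matrix_mul_assoc)
  moreover have "Y = Y ** P + Y ** (mat 1 - P)"
    by (simp add: matrix_diff_ldistrib)
  ultimately have "(norm Y)\<^sup>2 = (norm (Y ** P))\<^sup>2 + (norm (Y ** (mat 1 - P)))\<^sup>2"
    by (metis norm_add_Pythagorean orthogonal_def)
  then show ?thesis
    by simp
qed

section \<open>Perturbation of the Moore--Penrose inverse\<close>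

lemma pinv_mult_complement_range:
  "pinv B ** (mat 1 - A ** pinv A) =
     pinv B ** cadjoint ((mat 1 - A ** pinv A) ** (B - A) ** pinv B)"
proof -
  let ?Q = "mat 1 - A ** pinv A"
  have "cadjoint ?Q = ?Q"
    using orthogonal_projector_complement[OF orthogonal_projector_mult_pinv[of A]]
    by (simp add: orthogonal_projector_def)
  then have "cadjoint (?Q ** (B - A) ** pinv B) = cadjoint (pinv B) ** (cadjoint (B - A) ** ?Q)"
    by (simp only: cadjoint_matrix_mult)
  moreover have "cadjoint (B - A) ** ?Q = cadjoint B ** ?Q"
    by (simp only: cadjoint_diff matrix_diff_rdistrib cadjoint_mult_complement_range diff_zero)
  ultimately show ?thesis
    by (simp only: matrix_mul_assoc pinv_mult_cadjoint_pinv_cadjoint)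
qed

lemma complement_corange_mult_pinv:
  "(mat 1 - pinv B ** B) ** pinv A =
     - (cadjoint (pinv A ** (B - A) ** (mat 1 - pinv B ** B)) ** pinv A)"
proof -
  let ?R = "mat 1 - pinv B ** B"
  have "cadjoint ?R = ?R"
    using orthogonal_projector_complement[OF orthogonal_projector_pinv_mult[of B]]
    by (simp add: orthogonal_projector_def)
  then have "cadjoint (pinv A ** (B - A) ** ?R) ** pinv A = ?R ** cadjoint (B - A) ** cadjoint (pinv A) ** pinv A"
    by (simp only: cadjoint_matrix_mult matrix_mul_assoc)
  also have "?R ** cadjoint (B - A) = - (?R ** cadjoint A)"
    by (simp only: cadjoint_diff matrix_diff_ldistrib complement_corange_mult_cadjoint diff_0)
  also have "- (?R ** cadjoint A) ** cadjoint (pinv A) ** pinv A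
      = - (?R ** (cadjoint A ** cadjoint (pinv A) ** pinv A))"
    by (simp only: matrix_mul_lneg matrix_mul_assoc)
  finally show ?thesis
    by (simp only: cadjoint_cadjoint_pinv_pinv minus_minus)
qed

lemma pinv_diff_decomposition:
  "pinv B - pinv A = - (pinv B ** (B - A) ** pinv A) + pinv B ** (mat 1 - A ** pinv A)
     - (mat 1 - pinv B ** B) ** pinv A"
  by (simp add: matrix_diff_ldistrib matrix_diff_rdistrib matrix_mul_assoc)

lemma power2_norm_pinv_diff:
  fixes A B :: "complex^'n^'m"
  shows "(norm (pinv B - pinv A))\<^sup>2 = (norm (pinv B ** (B - A) ** pinv A))\<^sup>2
     + (norm (pinv B ** (mat 1 - A ** pinv A)))\<^sup>2 + (norm ((mat 1 - pinv B ** B) ** pinv A))\<^sup>2"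
proof -
  define X1 where "X1 = - (pinv B ** (B - A) ** pinv A)"
  define X2 where "X2 = pinv B ** (mat 1 - A ** pinv A)"
  define X3 where "X3 = - ((mat 1 - pinv B ** B) ** pinv A)"
  have PA: "orthogonal_projector (A ** pinv A)" and QB: "orthogonal_projector (pinv B ** B)"
    by (simp_all add: orthogonal_projector_mult_pinv orthogonal_projector_pinv_mult)
  have "pinv A ** (A ** pinv A) = pinv A"
    by (simp add: matrix_mul_assoc pinv_mult_pinv)
  then have "inner X1 X2 = 0"
    using PA orthogonal_projector_mult_complement(2)[OF PA]
    by (intro inner_eq_0_selfadjoint_right[of "A ** pinv A"])
      (simp_all add: X1_def X2_def orthogonal_projector_def matrix_mul_lneg flip: matrix_mul_assoc)
  moreover have "inner X1 X3 = 0" and "inner X2 X3 = 0"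
    using QB orthogonal_projector_mult_complement(1)[OF QB]
    by (intro inner_eq_0_selfadjoint_left[of "pinv B ** B"],
      simp_all add: X1_def X2_def X3_def orthogonal_projector_def matrix_mul_rneg matrix_mul_assoc
        pinv_mult_pinv)+
  ultimately have "(norm (X1 + X2 + X3))\<^sup>2 = (norm X1)\<^sup>2 + (norm X2)\<^sup>2 + (norm X3)\<^sup>2"
    by (simp add: norm_add_Pythagorean orthogonal_def inner_add_left)
  moreover have "pinv B - pinv A = X1 + X2 + X3"
    unfolding X1_def X2_def X3_def
    by (subst pinv_diff_decomposition) (rule diff_conv_add_uminus)
  ultimately show ?thesis
    by (simp only: X1_def X2_def X3_def norm_minus_cancel)
qed

lemma power2_norm_pinv_diff_le:
  fixes A B :: "complex^'n^'m"
  shows "(norm (pinv B - pinv A))\<^sup>2 \<le>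
     (spec_norm (pinv A))\<^sup>2 * ((norm (pinv A ** (B - A)))\<^sup>2
       - (norm (pinv A ** (B - A) ** pinv B ** B))\<^sup>2)
   + (spec_norm (pinv B))\<^sup>2 * ((norm ((B - A) ** pinv B))\<^sup>2
       - (norm (A ** pinv A ** (B - A) ** pinv B))\<^sup>2)
   + (norm (pinv B ** (B - A) ** pinv A))\<^sup>2"
proof -
  let ?PA = "A ** pinv A" and ?QB = "pinv B ** B"
  have "norm (pinv B ** (mat 1 - ?PA)) \<le> spec_norm (pinv B) * norm ((mat 1 - ?PA) ** (B - A) ** pinv B)"
    unfolding pinv_mult_complement_range
    by (metis norm_cadjoint norm_matrix_mult_le_left)
  from power_mono[OF this norm_ge_zero, of 2]
  have range_part: "(norm (pinv B ** (mat 1 - ?PA)))\<^sup>2 \<le> (spec_norm (pinv B))\<^sup>2 *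
      ((norm ((B - A) ** pinv B))\<^sup>2 - (norm (?PA ** (B - A) ** pinv B))\<^sup>2)"
    using power2_norm_complement_projector_left[OF orthogonal_projector_mult_pinv[of A], of "(B - A) ** pinv B"]
    by (simp only: power_mult_distrib matrix_mul_assoc)
  have "norm ((mat 1 - ?QB) ** pinv A) \<le> norm (pinv A ** (B - A) ** (mat 1 - ?QB)) * spec_norm (pinv A)"
    unfolding complement_corange_mult_pinv norm_minus_cancel
    by (metis norm_cadjoint norm_matrix_mult_le_right)
  from power_mono[OF this norm_ge_zero, of 2]
  have corange_part: "(norm ((mat 1 - ?QB) ** pinv A))\<^sup>2 \<le> (spec_norm (pinv A))\<^sup>2 *
      ((norm (pinv A ** (B - A)))\<^sup>2 - (norm (pinv A ** (B - A) ** pinv B ** B))\<^sup>2)"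
    using power2_norm_complement_projector_right[OF orthogonal_projector_pinv_mult[of B], of "pinv A ** (B - A)"]
    by (simp only: power_mult_distrib matrix_mul_assoc mult.commute)
  show ?thesis
    using power2_norm_pinv_diff[where A = A and B = B] range_part corange_part by linarith
qed

theorem theorem3p2:
  fixes A B E :: "complex^'n^'m"
  assumes "E = B - A"
  shows "(frob_norm (pinv B - pinv A))\<^sup>2 \<le>
    min ((spec_norm (pinv A))\<^sup>2 * ((frob_norm (pinv A ** E))\<^sup>2
            - (frob_norm (pinv A ** E ** pinv B ** B))\<^sup>2)
         + (spec_norm (pinv B))\<^sup>2 * ((frob_norm (E ** pinv B))\<^sup>2
            - (frob_norm (A ** pinv A ** E ** pinv B))\<^sup>2)
         + (frob_norm (pinv B ** E ** pinv A))\<^sup>2)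
        ((spec_norm (pinv A))\<^sup>2 * ((frob_norm (E ** pinv A))\<^sup>2
            - (frob_norm (B ** pinv B ** E ** pinv A))\<^sup>2)
         + (spec_norm (pinv B))\<^sup>2 * ((frob_norm (pinv B ** E))\<^sup>2
            - (frob_norm (pinv B ** E ** pinv A ** A))\<^sup>2)
         + (frob_norm (pinv A ** E ** pinv B))\<^sup>2)"
proof -
  have swap: "norm (pinv A - pinv B) = norm (pinv B - pinv A)"
    by (rule norm_minus_commute)
  have "A - B = - E"
    using assms by simp
  then show ?thesis
    using power2_norm_pinv_diff_le[where A = A and B = B] power2_norm_pinv_diff_le[where A = B and B = A]
    unfolding frob_norm_eq_norm swap assms[symmetric]
    by (simp add: matrix_mul_lneg matrix_mul_rneg)
qed

end
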